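(* Let $\Gamma=(V,\nu,\mu)$ be a fuzzy graph on $n$ vertices with maximum fuzzy degree $\Delta$ and minimum fuzzy degree $\delta$. Then $$\sigma^*(\Gamma)\le 2n+\frac{(\Delta-\delta)^2}{4}.$$
   Context: A fuzzy graph $\Gamma=(V,\nu,\mu)$ consists of a finite vertex set $V$ with $|V|=n\ge1$, a map $\nu:V\to[0,1]$, and a symmetric map $\mu:V\times V\to[0,1]$ with $\mu(u,v)\le\min(\nu(u),\nu(v))$. The fuzzy degree is $d_\Gamma(v)=\sum_{u\ne v}\mu(v,u)$, the fuzzy size is $\mathrm{ew}(\Gamma)=\frac12\sum_v d_\Gamma(v)$, $\lambda=2\,\mathrm{ew}(\Gamma)/n$, and the fuzzy sigma index is $\sigma^*(\Gamma)=\frac1n\sum_{v}(d_\Gamma(v)-\lambda)^2$. $\Delta=\max_v d_\Gamma(v)$, $\delta=\min_v d_\Gamma(v)$. *)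

theory Defs
  imports Complex_Main
begin

definition fuzzy_graph :: "'a set \<Rightarrow> ('a \<Rightarrow> real) \<Rightarrow> ('a \<Rightarrow> 'a \<Rightarrow> real) \<Rightarrow> bool" where
  "fuzzy_graph V \<nu> \<mu> \<longleftrightarrow> finite V \<and> V \<noteq> {} \<and>
     (\<forall>v\<in>V. 0 \<le> \<nu> v \<and> \<nu> v \<le> 1) \<and>
     (\<forall>u\<in>V. \<forall>v\<in>V. 0 \<le> \<mu> u v \<and> \<mu> u v \<le> 1 \<and> \<mu> u v = \<mu> v u \<and>
        \<mu> u v \<le> min (\<nu> u) (\<nu> v))"

definition fuzzy_degree :: "'a set \<Rightarrow> ('a \<Rightarrow> 'a \<Rightarrow> real) \<Rightarrow> 'a \<Rightarrow> real" where
  "fuzzy_degree V \<mu> v = (\<Sum>u\<in>V - {v}. \<mu> v u)"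

definition fuzzy_size :: "'a set \<Rightarrow> ('a \<Rightarrow> 'a \<Rightarrow> real) \<Rightarrow> real" where
  "fuzzy_size V \<mu> = (\<Sum>v\<in>V. fuzzy_degree V \<mu> v) / 2"

definition fuzzy_lambda :: "'a set \<Rightarrow> ('a \<Rightarrow> 'a \<Rightarrow> real) \<Rightarrow> real" where
  "fuzzy_lambda V \<mu> = 2 * fuzzy_size V \<mu> / real (card V)"

definition fuzzy_sigma :: "'a set \<Rightarrow> ('a \<Rightarrow> 'a \<Rightarrow> real) \<Rightarrow> real" where
  "fuzzy_sigma V \<mu> = (\<Sum>v\<in>V. (fuzzy_degree V \<mu> v - fuzzy_lambda V \<mu>)^2) / real (card V)"

definition fuzzy_max_degree :: "'a set \<Rightarrow> ('a \<Rightarrow> 'a \<Rightarrow> real) \<Rightarrow> real" where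
  "fuzzy_max_degree V \<mu> = Max (fuzzy_degree V \<mu> ` V)"

definition fuzzy_min_degree :: "'a set \<Rightarrow> ('a \<Rightarrow> 'a \<Rightarrow> real) \<Rightarrow> real" where
  "fuzzy_min_degree V \<mu> = Min (fuzzy_degree V \<mu> ` V)"

end

theory Submission
  imports Defs
begin

text \<open>The fuzzy sigma index is the variance of the degree sequence. Since the mean minimises
  the mean squared deviation, the variance is at most the mean squared deviation from the
  midpoint \<open>(\<Delta> + \<delta>) / 2\<close>, and every degree lies within \<open>(\<Delta> - \<delta>) / 2\<close> of that midpoint
  (Popoviciu's inequality). This gives \<open>\<sigma>\<^sup>* \<le> (\<Delta> - \<delta>)\<^sup>2 / 4\<close>.\<close>

lemma sum_sq_deviation_shift:
  fixes f :: "'a \<Rightarrow> real" and A :: "'a set" and m :: real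
  defines "m \<equiv> sum f A / card A"
  shows "(\<Sum>x\<in>A. (f x - c)\<^sup>2) = (\<Sum>x\<in>A. (f x - m)\<^sup>2) + card A * (m - c)\<^sup>2"
proof (cases "finite A \<and> A \<noteq> {}")
  case True
  then have "(\<Sum>x\<in>A. f x - m) = 0"
    by (simp add: sum_subtractf m_def)
  moreover have "(\<Sum>x\<in>A. (f x - c)\<^sup>2)
      = (\<Sum>x\<in>A. (f x - m)\<^sup>2 + 2 * (m - c) * (f x - m) + (m - c)\<^sup>2)"
    by (rule sum.cong) (simp_all add: power2_eq_square algebra_simps)
  then have "(\<Sum>x\<in>A. (f x - c)\<^sup>2)
      = (\<Sum>x\<in>A. (f x - m)\<^sup>2) + 2 * (m - c) * (\<Sum>x\<in>A. f x - m) + card A * (m - c)\<^sup>2"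
    by (simp add: sum.distrib sum_distrib_left)
  ultimately show ?thesis
    by simp
qed auto

lemma sum_sq_deviation_mean_le:
  fixes f :: "'a \<Rightarrow> real"
  shows "(\<Sum>x\<in>A. (f x - sum f A / card A)\<^sup>2) \<le> (\<Sum>x\<in>A. (f x - c)\<^sup>2)"
  unfolding sum_sq_deviation_shift[where f = f and A = A and c = c] by simp

lemma popoviciu_inequality:
  fixes f :: "'a \<Rightarrow> real"
  assumes "\<And>x. x \<in> A \<Longrightarrow> a \<le> f x \<and> f x \<le> b"
  shows "(\<Sum>x\<in>A. (f x - sum f A / card A)\<^sup>2) / card A \<le> (b - a)\<^sup>2 / 4"
proof -
  have dev_mid: "(f x - (a + b) / 2)\<^sup>2 \<le> ((b - a) / 2)\<^sup>2" if "x \<in> A" for x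
    using assms[OF that] by (intro abs_le_square_iff[THEN iffD1]) (auto simp: abs_le_iff field_simps)
  have "(\<Sum>x\<in>A. (f x - sum f A / card A)\<^sup>2) \<le> (\<Sum>x\<in>A. (f x - (a + b) / 2)\<^sup>2)"
    by (rule sum_sq_deviation_mean_le)
  also have "\<dots> \<le> card A * ((b - a) / 2)\<^sup>2"
    using sum_mono[OF dev_mid] by simp
  finally show ?thesis
    by (cases "card A = 0") (simp_all add: divide_le_eq power_divide mult.commute)
qed

lemma fuzzy_sigma_le_degree_spread:
  assumes "finite V"
  shows "fuzzy_sigma V \<mu> \<le> (fuzzy_max_degree V \<mu> - fuzzy_min_degree V \<mu>)\<^sup>2 / 4"
proof -
  have "fuzzy_lambda V \<mu> = sum (fuzzy_degree V \<mu>) V / card V"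
    by (simp add: fuzzy_lambda_def fuzzy_size_def)
  moreover have "fuzzy_min_degree V \<mu> \<le> fuzzy_degree V \<mu> v \<and> fuzzy_degree V \<mu> v \<le> fuzzy_max_degree V \<mu>"
    if "v \<in> V" for v
    using assms that by (simp add: fuzzy_min_degree_def fuzzy_max_degree_def)
  ultimately show ?thesis
    unfolding fuzzy_sigma_def by (metis popoviciu_inequality)
qed

theorem proposition2p7:
  fixes V :: "'a set" and \<nu> :: "'a \<Rightarrow> real" and \<mu> :: "'a \<Rightarrow> 'a \<Rightarrow> real"
  assumes "fuzzy_graph V \<nu> \<mu>"
  shows "fuzzy_sigma V \<mu> \<le> 2 * real (card V)
           + (fuzzy_max_degree V \<mu> - fuzzy_min_degree V \<mu>)^2 / 4"
proof -
  have "finite V"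
    using assms by (simp add: fuzzy_graph_def)
  then have "fuzzy_sigma V \<mu> \<le> (fuzzy_max_degree V \<mu> - fuzzy_min_degree V \<mu>)\<^sup>2 / 4"
    by (rule fuzzy_sigma_le_degree_spread)
  then show ?thesis
    by simp
qed

end
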